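(* Let $(M,J)$ be a complex manifold. Let $\mathcal S_{(M,J)}$ be the set of special connections on $(M,J)$, i.e. torsion-free flat connections $\nabla$ with $\nabla J$ symmetric, and let $\mathcal C_{(M,J)}$ be the set of pairs $(D,S)$ where $D$ is a torsion-free complex connection ($DJ=0$) and $S$ is a symmetric $(1,2)$-tensor anticommuting with $J$ such that $R^D=-[S,S]$ and $d^DS=0$. Then there is a natural bijection $\mathcal S_{(M,J)}\cong\mathcal C_{(M,J)}$, given by $\nabla\mapsto(\nabla-\frac12J\nabla J,\,-\frac12J\nabla J)$ with inverse $(D,S)\mapsto D-S$.
   Context: For a $(1,2)$-tensor $S$ (viewed as $\mathrm{End}(TM)$-valued 1-form $X\mapsto S_X$): symmetric means $S_XY=S_YX$; $[S,S]_{X,Y}=S_XS_Y-S_YS_X$; $(d^DS)(X,Y)=(D_XS)_Y-(D_YS)_X$; $(J\nabla J)_XY=J((\nabla_XJ)Y)$. $R^D_{X,Y}=D_XD_Y-D_YD_X-D_{[X,Y]}$. *)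

theory Defs
  imports Main "HOL.Real_Vector_Spaces"
begin

text \<open>
  Algebraic model of a complex manifold (M,J): 'f plays the role of the ring of
  smooth real functions C^\<infinity>(M) (a commutative real algebra), 'v the
  C^\<infinity>(M)-module of smooth vector fields, smul the module action, act X f the
  derivative X(f), br the Lie bracket of vector fields and J the (integrable)
  complex structure.
\<close>

definition vf_structure ::
  "('f::{comm_ring_1,real_algebra_1} \<Rightarrow> 'v::ab_group_add \<Rightarrow> 'v) \<Rightarrow> ('v \<Rightarrow> 'f \<Rightarrow> 'f)
   \<Rightarrow> ('v \<Rightarrow> 'v \<Rightarrow> 'v) \<Rightarrow> bool" where
  "vf_structure smul act br \<longleftrightarrow>
     (\<forall>a b v. smul (a * b) v = smul a (smul b v)) \<and>
     (\<forall>v. smul 1 v = v) \<and>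
     (\<forall>a b v. smul (a + b) v = smul a v + smul b v) \<and>
     (\<forall>a v w. smul a (v + w) = smul a v + smul a w) \<and>
     (\<forall>X Y f. act (X + Y) f = act X f + act Y f) \<and>
     (\<forall>g X f. act (smul g X) f = g * act X f) \<and>
     (\<forall>X f g. act X (f + g) = act X f + act X g) \<and>
     (\<forall>X f g. act X (f * g) = act X f * g + f * act X g) \<and>
     (\<forall>X c f. act X (scaleR c f) = scaleR c (act X f)) \<and>
     (\<forall>X Y f. act (br X Y) f = act X (act Y f) - act Y (act X f)) \<and>
     (\<forall>X Y. br X Y = - br Y X) \<and>
     (\<forall>X Y Z. br (X + Y) Z = br X Z + br Y Z) \<and>
     (\<forall>X Y Z. br X (br Y Z) + br Y (br Z X) + br Z (br X Y) = 0) \<and>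
     (\<forall>X f Y. br X (smul f Y) = smul (act X f) Y + smul f (br X Y))"

definition complex_structure ::
  "('f::{comm_ring_1,real_algebra_1} \<Rightarrow> 'v::ab_group_add \<Rightarrow> 'v) \<Rightarrow> ('v \<Rightarrow> 'v \<Rightarrow> 'v)
   \<Rightarrow> ('v \<Rightarrow> 'v) \<Rightarrow> bool" where
  "complex_structure smul br J \<longleftrightarrow>
     (\<forall>X Y. J (X + Y) = J X + J Y) \<and>
     (\<forall>f X. J (smul f X) = smul f (J X)) \<and>
     (\<forall>X. J (J X) = - X) \<and>
     (\<comment> \<open>integrability: vanishing Nijenhuis tensor\<close>
      \<forall>X Y. br (J X) (J Y) - J (br (J X) Y) - J (br X (J Y)) - br X Y = 0)"

text \<open>A (linear) connection: D X Y = D_X Y.\<close>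
definition connection ::
  "('f::comm_ring_1 \<Rightarrow> 'v::ab_group_add \<Rightarrow> 'v) \<Rightarrow> ('v \<Rightarrow> 'f \<Rightarrow> 'f)
   \<Rightarrow> ('v \<Rightarrow> 'v \<Rightarrow> 'v) \<Rightarrow> bool" where
  "connection smul act D \<longleftrightarrow>
     (\<forall>X Y Z. D (X + Y) Z = D X Z + D Y Z) \<and>
     (\<forall>f X Y. D (smul f X) Y = smul f (D X Y)) \<and>
     (\<forall>X Y Z. D X (Y + Z) = D X Y + D X Z) \<and>
     (\<forall>X f Y. D X (smul f Y) = smul (act X f) Y + smul f (D X Y))"

text \<open>A (1,2)-tensor S, viewed as X \<mapsto> S_X, with S X Y = S_X Y.\<close>
definition tensor12 ::
  "('f::comm_ring_1 \<Rightarrow> 'v::ab_group_add \<Rightarrow> 'v) \<Rightarrow> ('v \<Rightarrow> 'v \<Rightarrow> 'v) \<Rightarrow> bool" where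
  "tensor12 smul S \<longleftrightarrow>
     (\<forall>X Y Z. S (X + Y) Z = S X Z + S Y Z) \<and>
     (\<forall>f X Y. S (smul f X) Y = smul f (S X Y)) \<and>
     (\<forall>X Y Z. S X (Y + Z) = S X Y + S X Z) \<and>
     (\<forall>f X Y. S X (smul f Y) = smul f (S X Y))"

definition torsion_free :: "('v::ab_group_add \<Rightarrow> 'v \<Rightarrow> 'v) \<Rightarrow> ('v \<Rightarrow> 'v \<Rightarrow> 'v) \<Rightarrow> bool" where
  "torsion_free br D \<longleftrightarrow> (\<forall>X Y. D X Y - D Y X - br X Y = 0)"

definition curvature ::
  "('v::ab_group_add \<Rightarrow> 'v \<Rightarrow> 'v) \<Rightarrow> ('v \<Rightarrow> 'v \<Rightarrow> 'v) \<Rightarrow> 'v \<Rightarrow> 'v \<Rightarrow> 'v \<Rightarrow> 'v" where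
  "curvature br D X Y Z = D X (D Y Z) - D Y (D X Z) - D (br X Y) Z"

definition flat :: "('v::ab_group_add \<Rightarrow> 'v \<Rightarrow> 'v) \<Rightarrow> ('v \<Rightarrow> 'v \<Rightarrow> 'v) \<Rightarrow> bool" where
  "flat br D \<longleftrightarrow> (\<forall>X Y Z. curvature br D X Y Z = 0)"

definition covJ :: "('v::ab_group_add \<Rightarrow> 'v \<Rightarrow> 'v) \<Rightarrow> ('v \<Rightarrow> 'v) \<Rightarrow> 'v \<Rightarrow> 'v \<Rightarrow> 'v" where
  "covJ D J X Y = D X (J Y) - J (D X Y)"

definition JnablaJ :: "('v::ab_group_add \<Rightarrow> 'v \<Rightarrow> 'v) \<Rightarrow> ('v \<Rightarrow> 'v) \<Rightarrow> 'v \<Rightarrow> 'v \<Rightarrow> 'v" where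
  "JnablaJ D J X Y = J (covJ D J X Y)"

definition symmetric12 :: "('v \<Rightarrow> 'v \<Rightarrow> 'v) \<Rightarrow> bool" where
  "symmetric12 S \<longleftrightarrow> (\<forall>X Y. S X Y = S Y X)"

definition anticommutes_J :: "('v::ab_group_add \<Rightarrow> 'v \<Rightarrow> 'v) \<Rightarrow> ('v \<Rightarrow> 'v) \<Rightarrow> bool" where
  "anticommutes_J S J \<longleftrightarrow> (\<forall>X Y. S X (J Y) = - J (S X Y))"

definition bracketSS :: "('v::ab_group_add \<Rightarrow> 'v \<Rightarrow> 'v) \<Rightarrow> 'v \<Rightarrow> 'v \<Rightarrow> 'v \<Rightarrow> 'v" where
  "bracketSS S X Y Z = S X (S Y Z) - S Y (S X Z)"

definition covS :: "('v::ab_group_add \<Rightarrow> 'v \<Rightarrow> 'v) \<Rightarrow> ('v \<Rightarrow> 'v \<Rightarrow> 'v) \<Rightarrow> 'v \<Rightarrow> 'v \<Rightarrow> 'v \<Rightarrow> 'v" where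
  "covS D S X Y Z = D X (S Y Z) - S (D X Y) Z - S Y (D X Z)"

definition dD :: "('v::ab_group_add \<Rightarrow> 'v \<Rightarrow> 'v) \<Rightarrow> ('v \<Rightarrow> 'v \<Rightarrow> 'v) \<Rightarrow> 'v \<Rightarrow> 'v \<Rightarrow> 'v \<Rightarrow> 'v" where
  "dD D S X Y Z = covS D S X Y Z - covS D S Y X Z"

definition special_connections where
  "special_connections smul act br J =
     {N. connection smul act N \<and> torsion_free br N \<and> flat br N \<and> symmetric12 (covJ N J)}"

definition C_pairs where
  "C_pairs smul act br J =
     {(D, S). connection smul act D \<and> torsion_free br D \<and> (\<forall>X Y. D X (J Y) = J (D X Y)) \<and>
        tensor12 smul S \<and> symmetric12 S \<and> anticommutes_J S J \<and>
        (\<forall>X Y Z. curvature br D X Y Z = - bracketSS S X Y Z) \<and>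
        (\<forall>X Y Z. dD D S X Y Z = 0)}"

definition to_pair where
  "to_pair smul J N =
     ((\<lambda>X Y. N X Y - smul (of_real (1/2)) (JnablaJ N J X Y)),
      (\<lambda>X Y. - smul (of_real (1/2)) (JnablaJ N J X Y)))"

definition from_pair :: "('v::ab_group_add \<Rightarrow> 'v \<Rightarrow> 'v) \<times> ('v \<Rightarrow> 'v \<Rightarrow> 'v) \<Rightarrow> 'v \<Rightarrow> 'v \<Rightarrow> 'v" where
  "from_pair p = (\<lambda>X Y. fst p X Y - snd p X Y)"

end

theory Submission
  imports Defs
begin

text \<open>
  A connection \<nabla> splits uniquely as D - S with D complex (DJ = 0) and S anticommuting with J,
  namely S = -1/2 J\<nabla>J, since then \<nabla>J = 2JS. As S is symmetric exactly when \<nabla>J is, \<nabla> and D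
  have the same torsion. Finally R^(D-S) = R^D + [S,S] - d^D S, where R^D + [S,S] commutes with J
  and d^D S anticommutes with J, so \<nabla> is flat iff both parts vanish.
\<close>

lemma connection_linear:
  assumes "connection smul act D"
  shows "D (X + Y) Z = D X Z + D Y Z" "D (smul f X) Y = smul f (D X Y)"
    "D X (Y + Z) = D X Y + D X Z" "D X (smul f Y) = smul (act X f) Y + smul f (D X Y)"
    "D X 0 = 0" "D X (- Y) = - D X Y" "D X (Y - Z) = D X Y - D X Z"
    "D 0 Y = 0" "D (- X) Y = - D X Y" "D (X - Z) Y = D X Y - D Z Y"
proof -
  interpret right: additive "D X" using assms by unfold_locales (simp add: connection_def)
  interpret left: additive "\<lambda>X. D X Y" using assms by unfold_locales (simp add: connection_def)
  show "D (X + Y) Z = D X Z + D Y Z" "D (smul f X) Y = smul f (D X Y)"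
    "D X (Y + Z) = D X Y + D X Z" "D X (smul f Y) = smul (act X f) Y + smul f (D X Y)"
    using assms by (simp_all add: connection_def)
  show "D X 0 = 0" "D X (- Y) = - D X Y" "D X (Y - Z) = D X Y - D X Z"
    "D 0 Y = 0" "D (- X) Y = - D X Y" "D (X - Z) Y = D X Y - D Z Y"
    by (simp_all add: right.zero right.minus right.diff left.zero left.minus left.diff)
qed

lemma tensor12_linear:
  assumes "tensor12 smul S"
  shows "S (X + Y) Z = S X Z + S Y Z" "S (smul f X) Y = smul f (S X Y)"
    "S X (Y + Z) = S X Y + S X Z" "S X (smul f Y) = smul f (S X Y)"
    "S X 0 = 0" "S X (- Y) = - S X Y" "S X (Y - Z) = S X Y - S X Z"
    "S 0 Y = 0" "S (- X) Y = - S X Y" "S (X - Z) Y = S X Y - S Z Y"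
proof -
  interpret right: additive "S X" using assms by unfold_locales (simp add: tensor12_def)
  interpret left: additive "\<lambda>X. S X Y" using assms by unfold_locales (simp add: tensor12_def)
  show "S (X + Y) Z = S X Z + S Y Z" "S (smul f X) Y = smul f (S X Y)"
    "S X (Y + Z) = S X Y + S X Z" "S X (smul f Y) = smul f (S X Y)"
    using assms by (simp_all add: tensor12_def)
  show "S X 0 = 0" "S X (- Y) = - S X Y" "S X (Y - Z) = S X Y - S X Z"
    "S 0 Y = 0" "S (- X) Y = - S X Y" "S (X - Z) Y = S X Y - S Z Y"
    by (simp_all add: right.zero right.minus right.diff left.zero left.minus left.diff)
qed

lemma (in module) connection_add_tensor:
  assumes "connection scale act D" and "tensor12 scale S"
  shows "connection scale act (\<lambda>X Y. D X Y + S X Y)"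
  using assms unfolding connection_def tensor12_def by (simp add: algebra_simps)

lemma (in module) connection_diff_tensor:
  assumes "connection scale act D" and "tensor12 scale S"
  shows "connection scale act (\<lambda>X Y. D X Y - S X Y)"
  using assms unfolding connection_def tensor12_def by (simp add: algebra_simps)

lemma torsion_free_diff_symmetric_iff:
  assumes "symmetric12 S"
  shows "torsion_free br (\<lambda>X Y. D X Y - S X Y) \<longleftrightarrow> torsion_free br D"
proof -
  have "(D X Y - S X Y) - (D Y X - S Y X) - br X Y = D X Y - D Y X - br X Y" for X Y
    using assms by (simp add: symmetric12_def)
  then show ?thesis by (simp add: torsion_free_def)
qed

lemma curvature_diff_tensor:
  assumes D: "connection smul act D" and S: "tensor12 smul S" and "torsion_free br D"
  shows "curvature br (\<lambda>X Y. D X Y - S X Y) X Y Z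
       = curvature br D X Y Z + bracketSS S X Y Z - dD D S X Y Z"
proof -
  have "br X Y = D X Y - D Y X"
    using \<open>torsion_free br D\<close> by (simp add: torsion_free_def)
  then show ?thesis
    unfolding curvature_def bracketSS_def dD_def covS_def
    by (simp add: connection_linear[OF D] tensor12_linear[OF S])
qed

lemma from_pair_to_pair: "from_pair (to_pair smul J N) = N"
  by (simp add: to_pair_def from_pair_def)

text \<open>Neither the integrability of J nor the Lie bracket of vector fields enters the argument:
  a module with a linear J such that J^2 = -1 suffices.\<close>

locale complex_module = module smul
  for smul :: "'f::{comm_ring_1,real_algebra_1} \<Rightarrow> 'v::ab_group_add \<Rightarrow> 'v" +
  fixes J :: "'v \<Rightarrow> 'v"
  assumes J_add: "J (X + Y) = J X + J Y"
    and J_scale: "J (smul f X) = smul f (J X)"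
    and J_J [simp]: "J (J X) = - X"
begin

sublocale J: additive J
  by unfold_locales (rule J_add)

lemmas J_simps = J_add J_scale J.zero J.minus J.diff

abbreviation halve :: "'v \<Rightarrow> 'v" where
  "halve v \<equiv> smul (of_real (1/2)) v"

lemma halve_double: "halve (v + v) = v"
proof -
  have "halve (v + v) = smul (of_real (1/2) + of_real (1/2)) v"
    by (simp only: scale_left_distrib scale_right_distrib)
  also have "of_real (1/2) + of_real (1/2) = (1::'f)"
    by (metis of_real_1 of_real_add field_sum_of_halves)
  finally show ?thesis by simp
qed

lemma eq_zero_if_sum_of_J_commuting_and_anticommuting:
  assumes "P Z + Q Z = 0" and "P (J Z) + Q (J Z) = 0"
    and "P (J Z) = J (P Z)" and "Q (J Z) = - J (Q Z)"
  shows "P Z = 0" and "Q Z = 0"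
proof -
  have "J (P Z - Q Z) = 0" using assms(2-4) by (simp add: J_simps)
  then have "J (J (P Z - Q Z)) = 0" by (simp add: J_simps)
  then have PQ: "P Z = Q Z" by simp
  then have "halve (P Z + P Z) = 0" using assms(1) by simp
  then show "P Z = 0" by (simp only: halve_double)
  with PQ show "Q Z = 0" by simp
qed

lemma curvature_commutes_J:
  assumes "\<And>X Y. D X (J Y) = J (D X Y)"
  shows "curvature br D X Y (J Z) = J (curvature br D X Y Z)"
  unfolding curvature_def by (simp add: assms J_simps)

lemma bracketSS_commutes_J:
  assumes "tensor12 smul S" and "anticommutes_J S J"
  shows "bracketSS S X Y (J Z) = J (bracketSS S X Y Z)"
  using assms unfolding bracketSS_def anticommutes_J_def
  by (simp add: J_simps tensor12_linear)

lemma dD_anticommutes_J: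
  assumes "connection smul act D" and "\<And>X Y. D X (J Y) = J (D X Y)"
    and "tensor12 smul S" and "anticommutes_J S J"
  shows "dD D S X Y (J Z) = - J (dD D S X Y Z)"
  using assms unfolding dD_def covS_def anticommutes_J_def
  by (simp add: J_simps tensor12_linear connection_linear algebra_simps)

lemma flat_diff_iff:
  assumes D: "connection smul act D" and DJ: "\<And>X Y. D X (J Y) = J (D X Y)"
    and "torsion_free br D" and S: "tensor12 smul S" and SJ: "anticommutes_J S J"
  shows "flat br (\<lambda>X Y. D X Y - S X Y) \<longleftrightarrow>
     (\<forall>X Y Z. curvature br D X Y Z = - bracketSS S X Y Z) \<and> (\<forall>X Y Z. dD D S X Y Z = 0)"
proof -
  note R = curvature_diff_tensor[OF D S \<open>torsion_free br D\<close>]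
  define P where "P X Y Z = curvature br D X Y Z + bracketSS S X Y Z" for X Y Z
  define Q where "Q X Y Z = - dD D S X Y Z" for X Y Z
  have "P X Y (J Z) = J (P X Y Z)" for X Y Z
    by (simp add: P_def curvature_commutes_J[where D = D, OF DJ] bracketSS_commutes_J[OF S SJ] J_add)
  moreover have "Q X Y (J Z) = - J (Q X Y Z)" for X Y Z
    by (simp add: Q_def dD_anticommutes_J[OF D DJ S SJ] J.minus)
  moreover have "P X Y Z + Q X Y Z = 0" if "flat br (\<lambda>X Y. D X Y - S X Y)" for X Y Z
    using that by (simp add: P_def Q_def flat_def R)
  ultimately have "P X Y Z = 0 \<and> Q X Y Z = 0" if "flat br (\<lambda>X Y. D X Y - S X Y)" for X Y Z
    using that eq_zero_if_sum_of_J_commuting_and_anticommuting[of "P X Y" Z "Q X Y"] by metis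
  then show ?thesis
    by (auto simp: flat_def R P_def Q_def eq_neg_iff_add_eq_0)
qed

lemma covJ_diff_anticommuting:
  assumes "anticommutes_J S J"
  shows "covJ (\<lambda>X Y. D X Y - S X Y) J X Y = covJ D J X Y + (J (S X Y) + J (S X Y))"
  using assms unfolding covJ_def anticommutes_J_def by (simp add: J_simps algebra_simps)

definition S_of :: "('v \<Rightarrow> 'v \<Rightarrow> 'v) \<Rightarrow> 'v \<Rightarrow> 'v \<Rightarrow> 'v" where
  "S_of N = (\<lambda>X Y. - halve (JnablaJ N J X Y))"

lemma to_pair_eq: "to_pair smul J N = ((\<lambda>X Y. N X Y + S_of N X Y), S_of N)"
  by (simp add: to_pair_def S_of_def)

lemma J_S_of_double: "J (S_of N X Y) + J (S_of N X Y) = covJ N J X Y"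
proof -
  have "J (S_of N X Y) + J (S_of N X Y) = halve (covJ N J X Y + covJ N J X Y)"
    by (simp add: S_of_def JnablaJ_def J_simps scale_right_distrib)
  then show ?thesis by (simp only: halve_double)
qed

lemma tensor12_S_of:
  assumes "connection smul act N"
  shows "tensor12 smul (S_of N)"
  using assms unfolding tensor12_def S_of_def JnablaJ_def covJ_def
  by (simp add: connection_linear J_simps algebra_simps scale_left_commute)

lemma anticommutes_J_S_of:
  assumes "connection smul act N"
  shows "anticommutes_J (S_of N) J"
  using assms unfolding anticommutes_J_def S_of_def JnablaJ_def covJ_def
  by (simp add: connection_linear J_simps algebra_simps)

lemma covJ_complex_diff_anticommuting:
  assumes "\<And>X Y. D X (J Y) = J (D X Y)" and "anticommutes_J S J"
  shows "covJ (\<lambda>X Y. D X Y - S X Y) J X Y = J (S X Y) + J (S X Y)"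
proof -
  have "covJ D J X Y = 0"
    using assms(1) by (simp add: covJ_def)
  then show ?thesis
    by (simp add: covJ_diff_anticommuting[OF assms(2)])
qed

lemma S_of_diff:
  assumes "\<And>X Y. D X (J Y) = J (D X Y)" and "anticommutes_J S J"
  shows "S_of (\<lambda>X Y. D X Y - S X Y) = S"
proof -
  have JJ_double: "J (J s + J s) = - (s + s)" for s
    by (simp add: J_add)
  have "S_of (\<lambda>X Y. D X Y - S X Y) X Y = - halve (- (S X Y + S X Y))" for X Y
    by (simp only: S_of_def JnablaJ_def covJ_complex_diff_anticommuting[where D = D, OF assms] JJ_double)
  then have "S_of (\<lambda>X Y. D X Y - S X Y) X Y = S X Y" for X Y
    by (simp only: scale_minus_right minus_minus halve_double)
  then show ?thesis
    by (simp add: fun_eq_iff)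
qed

lemma to_pair_in_C_pairs:
  assumes "N \<in> special_connections smul act br J"
  shows "to_pair smul J N \<in> C_pairs smul act br J"
proof -
  have N: "connection smul act N" and "torsion_free br N" "flat br N" "symmetric12 (covJ N J)"
    using assms by (simp_all add: special_connections_def)
  define S where "S = S_of N"
  define D where "D = (\<lambda>X Y. N X Y + S X Y)"
  have N_eq: "N = (\<lambda>X Y. D X Y - S X Y)"
    by (simp add: D_def)
  have S: "tensor12 smul S" and SJ: "anticommutes_J S J"
    using tensor12_S_of[OF N] anticommutes_J_S_of[OF N] by (simp_all add: S_def)
  have "symmetric12 S"
    using \<open>symmetric12 (covJ N J)\<close> by (simp add: symmetric12_def S_def S_of_def JnablaJ_def)
  have D: "connection smul act D"
    unfolding D_def using N S by (rule connection_add_tensor)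
  have DJ: "D X (J Y) = J (D X Y)" for X Y
  proof -
    have "covJ N J X Y = covJ D J X Y + covJ N J X Y"
      using covJ_diff_anticommuting[OF SJ, of D X Y, folded N_eq] by (simp add: J_S_of_double S_def)
    then show ?thesis by (simp add: covJ_def)
  qed
  have "torsion_free br D"
    using \<open>torsion_free br N\<close> torsion_free_diff_symmetric_iff[OF \<open>symmetric12 S\<close>] by (simp add: N_eq)
  moreover have "(\<forall>X Y Z. curvature br D X Y Z = - bracketSS S X Y Z) \<and> (\<forall>X Y Z. dD D S X Y Z = 0)"
    using \<open>flat br N\<close> flat_diff_iff[OF D DJ \<open>torsion_free br D\<close> S SJ] by (simp add: N_eq)
  ultimately show ?thesis
    using D DJ S SJ \<open>symmetric12 S\<close> by (simp add: C_pairs_def to_pair_eq D_def S_def)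
qed

lemma from_pair_in_special_connections:
  assumes "p \<in> C_pairs smul act br J"
  shows "from_pair p \<in> special_connections smul act br J"
proof -
  obtain D S where p: "p = (D, S)" by (cases p)
  have D: "connection smul act D" and DT: "torsion_free br D" and DJ: "\<And>X Y. D X (J Y) = J (D X Y)"
    and S: "tensor12 smul S" and S_sym: "symmetric12 S" and SJ: "anticommutes_J S J"
    and "(\<forall>X Y Z. curvature br D X Y Z = - bracketSS S X Y Z) \<and> (\<forall>X Y Z. dD D S X Y Z = 0)"
    using assms by (simp_all add: p C_pairs_def)
  then have "flat br (\<lambda>X Y. D X Y - S X Y)"
    using flat_diff_iff[OF D DJ DT S SJ] by blast
  moreover have "symmetric12 (covJ (\<lambda>X Y. D X Y - S X Y) J)"
    using S_sym by (simp add: symmetric12_def covJ_complex_diff_anticommuting[where D = D, OF DJ SJ])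
  ultimately show ?thesis
    using connection_diff_tensor[OF D S] DT torsion_free_diff_symmetric_iff[OF S_sym]
    by (simp add: p from_pair_def special_connections_def)
qed

lemma to_pair_from_pair:
  assumes "p \<in> C_pairs smul act br J"
  shows "to_pair smul J (from_pair p) = p"
proof -
  obtain D S where p: "p = (D, S)" by (cases p)
  have "\<And>X Y. D X (J Y) = J (D X Y)" and "anticommutes_J S J"
    using assms by (simp_all add: p C_pairs_def)
  then have "S_of (\<lambda>X Y. D X Y - S X Y) = S"
    by (rule S_of_diff)
  then show ?thesis
    by (simp add: p from_pair_def to_pair_eq)
qed

end

lemma complex_module_if_complex_structure:
  assumes "vf_structure smul act br" and "complex_structure smul br J"
  shows "complex_module smul J"
proof -
  from assms(1) have "module smul"
    unfolding vf_structure_def module_def by metis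
  moreover from assms(2) have "complex_module_axioms smul J"
    unfolding complex_structure_def complex_module_axioms_def by blast
  ultimately show ?thesis
    by (rule complex_module.intro)
qed

theorem lemma2p3:
  fixes smul :: "'f::{comm_ring_1,real_algebra_1} \<Rightarrow> 'v::ab_group_add \<Rightarrow> 'v"
    and act :: "'v \<Rightarrow> 'f \<Rightarrow> 'f"
    and br :: "'v \<Rightarrow> 'v \<Rightarrow> 'v"
    and J :: "'v \<Rightarrow> 'v"
  assumes "vf_structure smul act br"
    and "complex_structure smul br J"
  shows "bij_betw (to_pair smul J) (special_connections smul act br J) (C_pairs smul act br J)
       \<and> (\<forall>p \<in> C_pairs smul act br J.
            from_pair p \<in> special_connections smul act br J \<and> to_pair smul J (from_pair p) = p)"
proof -
  interpret complex_module smul J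
    using assms by (rule complex_module_if_complex_structure)
  have "bij_betw (to_pair smul J) (special_connections smul act br J) (C_pairs smul act br J)"
    by (rule bij_betw_byWitness[where f' = from_pair])
      (auto simp: from_pair_to_pair to_pair_from_pair to_pair_in_C_pairs from_pair_in_special_connections)
  then show ?thesis
    by (simp add: from_pair_in_special_connections to_pair_from_pair)
qed

end
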